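(* Let $\mu,\nu$ be atomless, compactly supported probability measures on $\mathbb{R}$, let $\mathcal F=F_\mu-F_\nu$, and let $I=(a,b)$ be a maximal positivity interval of $\mathcal F$, i.e. $\mathcal F(a)=\mathcal F(b)=0$ and $\mathcal F>0$ on $I$. Then there exist nonnegative measures $\rho_1,\rho_2$ on $I$ such that, with $G(x):=\rho_2([x,b))$ and $F(y):=\rho_1((a,y])$ for $x,y\in I$, $$G\cdot\rho_1=\mu\quad\text{and}\quad F\cdot\rho_2=\nu\qquad\text{on }I;$$ moreover $F$ and $G$ are continuous and positive on $(a,b)$, and the measure $\gamma_0:=(\rho_1\otimes\rho_2)\llcorner\{(x,y):y>x\}$ belongs to $\Pi(\mu\llcorner I,\nu\llcorner I)$. Similarly, if $I=(a,b)$ is a maximal negativity interval of $\mathcal F$, there exist nonnegative measures $\rho_1,\rho_2$ on $I$ such that, with $F(y)=\rho_1([y,b))$ and $G(x)=\rho_2((a,x])$, one has $G\cdot\rho_1=\mu$, $F\cdot\rho_2=\nu$ on $I$, $F,G$ continuous and positive on $(a,b)$, and $(\rho_1\otimes\rho_2)\llcorner\{y<x\}\in\Pi(\mu\llcorner I,\nu\llcorner I)$.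
   Context: $F_\rho(x)=\rho((-\infty,x])$ is the cumulative distribution function. $\Pi(\alpha,\beta)$ denotes the set of positive measures on $\mathbb{R}^2$ with first marginal $\alpha$ and second marginal $\beta$. $\mu\llcorner I$ is the restriction of $\mu$ to $I$; $G\cdot\rho_1$ is the measure with density $G$ with respect to $\rho_1$. *)

theory Defs
  imports "HOL-Probability.Probability"
begin

definition cdf_of :: "real measure \<Rightarrow> real \<Rightarrow> real" where
  "cdf_of \<rho> x = measure \<rho> {..x}"

definition atomless :: "real measure \<Rightarrow> bool" where
  "atomless \<rho> \<longleftrightarrow> (\<forall>x. emeasure \<rho> {x} = 0)"

definition compactly_supported :: "real measure \<Rightarrow> bool" where
  "compactly_supported \<rho> \<longleftrightarrow> (\<exists>K. compact K \<and> emeasure \<rho> (UNIV - K) = 0)"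

definition restr :: "'a measure \<Rightarrow> 'a set \<Rightarrow> 'a measure" where
  "restr \<rho> S = density \<rho> (indicator S)"

definition couplings :: "real measure \<Rightarrow> real measure \<Rightarrow> (real \<times> real) measure set" where
  "couplings \<alpha> \<beta> = {\<gamma>. sets \<gamma> = sets (borel \<Otimes>\<^sub>M borel) \<and>
     (\<forall>A\<in>sets borel. emeasure \<gamma> (A \<times> UNIV) = emeasure \<alpha> A) \<and>
     (\<forall>B\<in>sets borel. emeasure \<gamma> (UNIV \<times> B) = emeasure \<beta> B)}"

end

theory Submission
  imports Defs
begin

text \<open>Write \<open>\<F> = F\<^sub>\<mu> - F\<^sub>\<nu>\<close> (called \<open>gap\<close> below) and let \<open>\<Phi>\<close> be a primitive of \<open>d\<mu> / \<F>\<close> on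
  \<open>(a, b)\<close>; take \<open>\<rho>\<^sub>1 = exp \<Phi> / \<F> \<cdot> \<mu>\<close> and \<open>\<rho>\<^sub>2 = exp (-\<Phi>) \<cdot> \<nu>\<close>. Since
  \<open>\<F> \<le> F\<^sub>\<mu> - F\<^sub>\<mu>(a)\<close>, \<open>\<Phi>\<close> tends to \<open>-\<infinity>\<close> at \<open>a\<close>, so \<open>\<rho>\<^sub>1 (a, y] = exp \<Phi>(y)\<close>.
  The product rule \<open>d(\<F> exp (-\<Phi>)) = - exp (-\<Phi>) d\<nu>\<close> and \<open>\<F>(b) = 0\<close> give
  \<open>\<rho>\<^sub>2 [x, b) = \<F>(x) exp (-\<Phi>(x))\<close>. Hence \<open>G \<cdot> \<rho>\<^sub>1 = \<mu>\<close> and \<open>F \<cdot> \<rho>\<^sub>2 = \<nu>\<close> on \<open>(a, b)\<close>,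
  and by Tonelli these are exactly the marginal conditions for \<open>\<rho>\<^sub>1 \<otimes> \<rho>\<^sub>2\<close> restricted
  to \<open>{x < y}\<close>. A negativity interval is a positivity interval with \<open>\<mu>\<close> and \<open>\<nu>\<close>
  exchanged.\<close>

section \<open>Measures with a continuous distribution function\<close>

lemma mono_superlevel_set_eq_Ioc:
  fixes \<Phi> :: "real \<Rightarrow> real"
  assumes "x \<le> y" "continuous_on {x..y} \<Phi>" "mono_on {x..y} \<Phi>" "\<Phi> x \<le> s" "s \<le> \<Phi> y"
  obtains t where "t \<in> {x..y}" "\<Phi> t = s" "{u\<in>{x<..y}. s < \<Phi> u} = {t<..y}"
proof -
  define S where "S = {x..y} \<inter> \<Phi> -` {..s}"
  have "closed S" unfolding S_def
    by (rule continuous_closed_preimage) (use assms in auto)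
  moreover have "x \<in> S" "bdd_above S"
    using assms unfolding S_def by (auto intro: bdd_aboveI[of _ y])
  ultimately have tS: "Sup S \<in> S"
    using closed_contains_Sup by blast
  obtain t0 where t0: "t0 \<in> {x..y}" "\<Phi> t0 = s"
    using IVT'[of \<Phi> x s y] assms by auto
  have "t0 \<le> Sup S"
    using t0 \<open>bdd_above S\<close> unfolding S_def by (intro cSup_upper) auto
  then have "\<Phi> t0 \<le> \<Phi> (Sup S)"
    using tS t0 assms(3) unfolding S_def by (auto intro: mono_onD)
  then have "\<Phi> (Sup S) = s"
    using tS t0 unfolding S_def by auto
  moreover have "{u\<in>{x<..y}. s < \<Phi> u} = {Sup S<..y}"
  proof (intro set_eqI iffI)
    fix u assume u: "u \<in> {u\<in>{x<..y}. s < \<Phi> u}"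
    have "Sup S < u"
    proof (rule ccontr)
      assume "\<not> Sup S < u"
      then have "\<Phi> u \<le> \<Phi> (Sup S)"
        using u tS unfolding S_def by (intro mono_onD[OF assms(3)]) auto
      then show False using u tS unfolding S_def by auto
    qed
    then show "u \<in> {Sup S<..y}" using u by auto
  next
    fix u assume u: "u \<in> {Sup S<..y}"
    then have "u \<notin> S"
      using \<open>bdd_above S\<close> cSup_upper by fastforce
    then show "u \<in> {u\<in>{x<..y}. s < \<Phi> u}"
      using u tS unfolding S_def by auto
  qed
  ultimately show ?thesis
    using that tS unfolding S_def by blast
qed

locale stieltjes_on =
  fixes m :: "real measure" and \<Phi> :: "real \<Rightarrow> real" and x y :: real
  assumes sets_eq: "sets m = sets borel"
    and le: "x \<le> y"
    and continuous: "continuous_on {x..y} \<Phi>"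
    and mono: "mono_on {x..y} \<Phi>"
    and emeasure_Ioc: "\<And>u v. x \<le> u \<Longrightarrow> u \<le> v \<Longrightarrow> v \<le> y \<Longrightarrow> emeasure m {u<..v} = ennreal (\<Phi> v - \<Phi> u)"
begin

lemma mono_le: "x \<le> u \<Longrightarrow> u \<le> v \<Longrightarrow> v \<le> y \<Longrightarrow> \<Phi> u \<le> \<Phi> v"
  by (rule mono_onD[OF mono]) auto

lemma emeasure_superlevel_set:
  "emeasure m {t\<in>{x<..y}. s < \<Phi> t} = emeasure lborel ({\<Phi> x<..\<Phi> y} \<inter> {s<..})"
proof (cases "s < \<Phi> x")
  case True
  then have "{t\<in>{x<..y}. s < \<Phi> t} = {x<..y}"
    using mono_le[of x] by (force intro: less_le_trans)
  moreover have "{\<Phi> x<..\<Phi> y} \<inter> {s<..} = {\<Phi> x<..\<Phi> y}" using True by auto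
  ultimately show ?thesis using emeasure_Ioc[of x y] le mono_le[of x y] by simp
next
  case False
  show ?thesis
  proof (cases "s \<le> \<Phi> y")
    case True
    obtain t where "t \<in> {x..y}" "\<Phi> t = s" "{u\<in>{x<..y}. s < \<Phi> u} = {t<..y}"
      using mono_superlevel_set_eq_Ioc[OF le continuous mono _ True] False by auto
    moreover have "{\<Phi> x<..\<Phi> y} \<inter> {s<..} = {s<..\<Phi> y}" using False by auto
    ultimately show ?thesis using emeasure_Ioc[of t y] True by simp
  next
    case False
    have "{t\<in>{x<..y}. s < \<Phi> t} = {}"
    proof (intro equals0I)
      fix t assume "t \<in> {t\<in>{x<..y}. s < \<Phi> t}"
      then show False using mono_le[of t y] False by auto
    qed
    moreover have "{\<Phi> x<..\<Phi> y} \<inter> {s<..} = {}" using False by auto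
    ultimately show ?thesis by (simp only:) simp
  qed
qed

definition clamped :: "real \<Rightarrow> real" where
  "clamped t = \<Phi> (max x (min y t))"

lemma borel_measurable_clamped [measurable]: "clamped \<in> borel_measurable borel"
proof (rule borel_measurable_continuous_onI)
  show "continuous_on UNIV clamped" unfolding clamped_def
    by (rule continuous_on_compose2[OF continuous]) (auto intro!: continuous_intros simp: le)
qed

lemma distr_clamped:
  "distr (density m (indicator {x<..y})) borel clamped = density lborel (indicator {\<Phi> x<..\<Phi> y})"
proof (rule measure_eqI_lessThan)
  show eq: "emeasure (distr (density m (indicator {x<..y})) borel clamped) {s<..}
      = emeasure (density lborel (indicator {\<Phi> x<..\<Phi> y})) {s<..}" for s
  proof -
    have "emeasure (distr (density m (indicator {x<..y})) borel clamped) {s<..}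
        = emeasure m ({x<..y} \<inter> (clamped -` {s<..} \<inter> space m))"
      using sets_eq by (simp add: emeasure_distr emeasure_restricted cong: measurable_cong_sets)
    also have "{x<..y} \<inter> (clamped -` {s<..} \<inter> space m) = {t\<in>{x<..y}. s < \<Phi> t}"
      using sets_eq_imp_space_eq[OF sets_eq] by (auto simp: clamped_def)
    also have "emeasure m \<dots> = emeasure lborel ({\<Phi> x<..\<Phi> y} \<inter> {s<..})"
      by (rule emeasure_superlevel_set)
    finally show ?thesis
      by (simp add: emeasure_restricted)
  qed
  show "emeasure (distr (density m (indicator {x<..y})) borel clamped) {s<..} < \<infinity>" for s
  proof -
    have "emeasure lborel ({\<Phi> x<..\<Phi> y} \<inter> {s<..}) \<le> emeasure lborel {\<Phi> x..\<Phi> y}"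
      by (rule emeasure_mono) auto
    then show ?thesis
      unfolding eq by (simp add: emeasure_restricted emeasure_lborel_Icc_eq le_less_trans[OF _ ennreal_less_top])
  qed
qed simp_all

lemma nn_integral_substitution:
  assumes [measurable]: "h \<in> borel_measurable borel"
  shows "(\<integral>\<^sup>+t. h (\<Phi> t) * indicator {x<..y} t \<partial>m) = (\<integral>\<^sup>+s. h s * indicator {\<Phi> x<..\<Phi> y} s \<partial>lborel)"
proof -
  have "(\<integral>\<^sup>+s. h s * indicator {\<Phi> x<..\<Phi> y} s \<partial>lborel)
      = (\<integral>\<^sup>+s. h s \<partial>distr (density m (indicator {x<..y})) borel clamped)"
    by (simp add: distr_clamped nn_integral_density mult.commute)
  also have "\<dots> = (\<integral>\<^sup>+t. h (clamped t) \<partial>density m (indicator {x<..y}))"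
    using sets_eq by (intro nn_integral_distr) (simp_all cong: measurable_cong_sets)
  also have "\<dots> = (\<integral>\<^sup>+t. indicator {x<..y} t * h (clamped t) \<partial>m)"
    using sets_eq by (intro nn_integral_density) (simp_all cong: measurable_cong_sets)
  also have "\<dots> = (\<integral>\<^sup>+t. h (\<Phi> t) * indicator {x<..y} t \<partial>m)"
    by (intro nn_integral_cong) (auto simp: clamped_def indicator_def)
  finally show ?thesis ..
qed

lemma nn_integral_FTC:
  assumes [measurable]: "g \<in> borel_measurable borel"
    and "\<And>s. s \<in> {\<Phi> x..\<Phi> y} \<Longrightarrow> DERIV H s :> g s"
    and "\<And>s. s \<in> {\<Phi> x..\<Phi> y} \<Longrightarrow> 0 \<le> g s"
  shows "(\<integral>\<^sup>+t. ennreal (g (\<Phi> t)) * indicator {x<..y} t \<partial>m) = ennreal (H (\<Phi> y) - H (\<Phi> x))"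
proof -
  have "(\<integral>\<^sup>+t. ennreal (g (\<Phi> t)) * indicator {x<..y} t \<partial>m)
     = (\<integral>\<^sup>+s. ennreal (g s) * indicator {\<Phi> x<..\<Phi> y} s \<partial>lborel)"
    by (rule nn_integral_substitution) measurable
  also have "\<dots> = (\<integral>\<^sup>+s. ennreal (g s) * indicator {\<Phi> x..\<Phi> y} s \<partial>lborel)"
    by (rule nn_integral_cong_AE, rule AE_mp[OF AE_lborel_singleton[of "\<Phi> x"]])
       (auto simp: indicator_def)
  also have "\<dots> = ennreal (H (\<Phi> y) - H (\<Phi> x))"
    using assms mono_le[of x y] le by (intro nn_integral_FTC_Icc) auto
  finally show ?thesis .
qed

end

text \<open>Tonelli on the triangle \<open>x < t < s \<le> y\<close>.\<close>
lemma nn_integral_Ioc_by_parts: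
  fixes \<sigma> m :: "real measure" and E :: "real \<Rightarrow> ennreal"
  assumes sets_\<sigma>: "sets \<sigma> = sets borel" and sets_m: "sets m = sets borel"
    and "sigma_finite_measure \<sigma>" "sigma_finite_measure m"
    and [measurable]: "E \<in> borel_measurable borel"
    and E_eq: "\<And>t. x \<le> t \<Longrightarrow> t \<le> y \<Longrightarrow> E t = E y + (\<integral>\<^sup>+s. E s * indicator {t<..y} s \<partial>m)"
  shows "(\<integral>\<^sup>+t. E t * indicator {x<..y} t \<partial>\<sigma>) =
     E y * emeasure \<sigma> {x<..y} + (\<integral>\<^sup>+s. E s * indicator {x<..y} s * emeasure \<sigma> {x<..<s} \<partial>m)"
proof -
  interpret pair_sigma_finite \<sigma> m
    using assms unfolding pair_sigma_finite_def by auto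
  define f where "f t s = E s * indicator {p. x < fst p \<and> fst p < snd p \<and> snd p \<le> y} (t, s)" for t s
  have "case_prod f \<in> borel_measurable (borel \<Otimes>\<^sub>M borel)"
    unfolding f_def by measurable
  then have f_meas: "case_prod f \<in> borel_measurable (\<sigma> \<Otimes>\<^sub>M m)"
    using sets_pair_measure_cong[OF sets_\<sigma> sets_m] by (simp cong: measurable_cong_sets)
  have "(\<integral>\<^sup>+t. E t * indicator {x<..y} t \<partial>\<sigma>) =
        (\<integral>\<^sup>+t. E y * indicator {x<..y} t + (\<integral>\<^sup>+s. f t s \<partial>m) \<partial>\<sigma>)"
  proof (rule nn_integral_cong)
    fix t
    show "E t * indicator {x<..y} t = E y * indicator {x<..y} t + (\<integral>\<^sup>+s. f t s \<partial>m)"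
    proof (cases "t \<in> {x<..y}")
      case True
      then show ?thesis
        using E_eq[of t] by (auto simp: f_def indicator_def intro!: nn_integral_cong)
    next
      case False
      then have "f t s = 0" for s by (auto simp: f_def indicator_def)
      with False show ?thesis by simp
    qed
  qed
  also have "\<dots> = (\<integral>\<^sup>+t. E y * indicator {x<..y} t \<partial>\<sigma>) + (\<integral>\<^sup>+t. (\<integral>\<^sup>+s. f t s \<partial>m) \<partial>\<sigma>)"
    using M2.borel_measurable_nn_integral[OF f_meas] sets_\<sigma>
    by (subst nn_integral_add) (auto cong: measurable_cong_sets)
  also have "(\<integral>\<^sup>+t. E y * indicator {x<..y} t \<partial>\<sigma>) = E y * emeasure \<sigma> {x<..y}"
    using sets_\<sigma> by (simp add: nn_integral_cmult_indicator)
  also have "(\<integral>\<^sup>+t. (\<integral>\<^sup>+s. f t s \<partial>m) \<partial>\<sigma>) = (\<integral>\<^sup>+s. (\<integral>\<^sup>+t. f t s \<partial>\<sigma>) \<partial>m)"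
    using Fubini'[OF f_meas] by simp
  also have "\<dots> = (\<integral>\<^sup>+s. E s * indicator {x<..y} s * emeasure \<sigma> {x<..<s} \<partial>m)"
  proof (rule nn_integral_cong)
    fix s
    have "(\<integral>\<^sup>+t. f t s \<partial>\<sigma>) = (\<integral>\<^sup>+t. (E s * indicator {x<..y} s) * indicator {x<..<s} t \<partial>\<sigma>)"
      unfolding f_def by (rule nn_integral_cong) (auto simp: indicator_def)
    then show "(\<integral>\<^sup>+t. f t s \<partial>\<sigma>) = E s * indicator {x<..y} s * emeasure \<sigma> {x<..<s}"
      using sets_\<sigma> by (simp add: nn_integral_cmult_indicator)
  qed
  finally show ?thesis .
qed

lemma tendsto_emeasure_Ioc_at_right:
  fixes M :: "real measure"
  assumes "sets M = sets borel" "a < y"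
  shows "((\<lambda>x. emeasure M {x<..y}) \<longlongrightarrow> emeasure M {a<..y}) (at_right a)"
proof (rule tendsto_at_right_sequentially[OF \<open>a < y\<close>])
  fix S :: "nat \<Rightarrow> real"
  assume S: "\<And>n. a < S n" "\<And>n. S n < y" "decseq S" "S \<longlonglongrightarrow> a"
  have "(\<Union>n. {S n<..y}) = {a<..y}"
  proof (intro set_eqI iffI)
    fix t assume "t \<in> {a<..y}"
    moreover obtain n where "S n < t"
      using \<open>t \<in> {a<..y}\<close> order_tendstoD(2)[OF S(4), of t] unfolding eventually_sequentially by auto
    ultimately show "t \<in> (\<Union>n. {S n<..y})" by auto
  qed (use S(1) less_trans in auto)
  moreover have "incseq (\<lambda>n. {S n<..y})"
    using S(3) by (auto simp: incseq_def decseq_def) (meson le_less_trans)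
  ultimately show "(\<lambda>n. emeasure M {S n<..y}) \<longlonglongrightarrow> emeasure M {a<..y}"
    using Lim_emeasure_incseq[of "\<lambda>n. {S n<..y}" M] assms by (auto simp: image_subset_iff)
qed

lemma tendsto_emeasure_Ioc_at_left:
  fixes M :: "real measure"
  assumes "sets M = sets borel" "x < b"
  shows "((\<lambda>y. emeasure M {x<..y}) \<longlongrightarrow> emeasure M {x<..<b}) (at_left b)"
proof (rule tendsto_at_left_sequentially[OF \<open>x < b\<close>])
  fix S :: "nat \<Rightarrow> real"
  assume S: "\<And>n. S n < b" "\<And>n. x < S n" "incseq S" "S \<longlonglongrightarrow> b"
  have "(\<Union>n. {x<..S n}) = {x<..<b}"
  proof (intro set_eqI iffI)
    fix t assume "t \<in> {x<..<b}"
    moreover obtain n where "t < S n"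
      using \<open>t \<in> {x<..<b}\<close> order_tendstoD(1)[OF S(4), of t] unfolding eventually_sequentially by auto
    ultimately show "t \<in> (\<Union>n. {x<..S n})" by (fastforce intro: less_imp_le)
  qed (use S(1) le_less_trans in auto)
  moreover have "incseq (\<lambda>n. {x<..S n})"
    using S(3) by (auto simp: incseq_def) (meson order_trans)
  ultimately show "(\<lambda>n. emeasure M {x<..S n}) \<longlonglongrightarrow> emeasure M {x<..<b}"
    using Lim_emeasure_incseq[of "\<lambda>n. {x<..S n}" M] assms by (auto simp: image_subset_iff)
qed

lemma borel_measurable_emeasure_section:
  fixes M :: "real measure"
  assumes "sigma_finite_measure M" "sets M = sets borel"
    and "Measurable.pred (borel \<Otimes>\<^sub>M borel) (\<lambda>p. P (fst p) (snd p))"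
  shows "(\<lambda>x. emeasure M {t. P x t}) \<in> borel_measurable borel"
proof -
  have "{p. P (fst p) (snd p)} \<in> sets (borel \<Otimes>\<^sub>M borel)"
    using assms(3) by (simp add: Measurable.pred_def space_pair_measure)
  then have "{p. P (fst p) (snd p)} \<in> sets (borel \<Otimes>\<^sub>M M)"
    unfolding sets_pair_measure_cong[OF refl assms(2), of borel] .
  from sigma_finite_measure.measurable_emeasure_Pair[OF assms(1) this]
  show ?thesis by (simp add: vimage_def)
qed

lemma restr_pair_measure_in_couplings:
  fixes M1 M2 :: "real measure" and P :: "(real \<times> real) set"
  assumes sets_M1: "sets M1 = sets borel" and sets_M2: "sets M2 = sets borel"
    and "sigma_finite_measure M1" "sigma_finite_measure M2"
    and P: "P \<in> sets (borel \<Otimes>\<^sub>M borel)"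
    and marginal1: "\<And>A. A \<in> sets borel \<Longrightarrow>
      (\<integral>\<^sup>+x. indicator A x * emeasure M2 {y. (x, y) \<in> P} \<partial>M1) = emeasure \<alpha> A"
    and marginal2: "\<And>B. B \<in> sets borel \<Longrightarrow>
      (\<integral>\<^sup>+y. indicator B y * emeasure M1 {x. (x, y) \<in> P} \<partial>M2) = emeasure \<beta> B"
  shows "restr (M1 \<Otimes>\<^sub>M M2) P \<in> couplings \<alpha> \<beta>"
proof -
  interpret pair_sigma_finite M1 M2
    using assms unfolding pair_sigma_finite_def by auto
  have sets_pair: "sets (M1 \<Otimes>\<^sub>M M2) = sets (borel \<Otimes>\<^sub>M borel)"
    by (rule sets_pair_measure_cong[OF sets_M1 sets_M2])
  have emeasure_restr: "emeasure (restr (M1 \<Otimes>\<^sub>M M2) P) X = emeasure (M1 \<Otimes>\<^sub>M M2) (P \<inter> X)"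
    if "X \<in> sets (borel \<Otimes>\<^sub>M borel)" for X
    unfolding restr_def using that sets_pair P by (subst emeasure_restricted) auto
  show ?thesis unfolding couplings_def
  proof (intro CollectI conjI ballI)
    show "sets (restr (M1 \<Otimes>\<^sub>M M2) P) = sets (borel \<Otimes>\<^sub>M borel)"
      unfolding restr_def using sets_pair by simp
  next
    fix A :: "real set" assume A: "A \<in> sets borel"
    have "emeasure (M1 \<Otimes>\<^sub>M M2) (P \<inter> A \<times> UNIV) = (\<integral>\<^sup>+x. emeasure M2 (Pair x -` (P \<inter> A \<times> UNIV)) \<partial>M1)"
      using A P sets_pair by (subst M2.emeasure_pair_measure_alt) auto
    also have "\<dots> = (\<integral>\<^sup>+x. indicator A x * emeasure M2 {y. (x, y) \<in> P} \<partial>M1)"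
      by (rule nn_integral_cong) (auto simp: indicator_def vimage_def)
    finally show "emeasure (restr (M1 \<Otimes>\<^sub>M M2) P) (A \<times> UNIV) = emeasure \<alpha> A"
      using A by (simp add: emeasure_restr marginal1)
  next
    fix B :: "real set" assume B: "B \<in> sets borel"
    have "emeasure (M1 \<Otimes>\<^sub>M M2) (P \<inter> UNIV \<times> B) = (\<integral>\<^sup>+y. emeasure M1 ((\<lambda>x. (x, y)) -` (P \<inter> UNIV \<times> B)) \<partial>M2)"
      using B P sets_pair by (subst emeasure_pair_measure_alt2) auto
    also have "\<dots> = (\<integral>\<^sup>+y. indicator B y * emeasure M1 {x. (x, y) \<in> P} \<partial>M2)"
      by (rule nn_integral_cong) (auto simp: indicator_def vimage_def)
    finally show "emeasure (restr (M1 \<Otimes>\<^sub>M M2) P) (UNIV \<times> B) = emeasure \<beta> B"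
      using B by (simp add: emeasure_restr marginal2)
  qed
qed

lemma pred_less_in_sets_pair:
  "{p::real \<times> real. fst p < snd p} \<in> sets (borel \<Otimes>\<^sub>M borel)"
  "{p::real \<times> real. snd p < fst p} \<in> sets (borel \<Otimes>\<^sub>M borel)"
proof -
  have "Measurable.pred (borel \<Otimes>\<^sub>M borel) (\<lambda>p::real \<times> real. fst p < snd p)"
    by measurable
  moreover have "Measurable.pred (borel \<Otimes>\<^sub>M borel) (\<lambda>p::real \<times> real. snd p < fst p)"
    by measurable
  ultimately show "{p::real \<times> real. fst p < snd p} \<in> sets (borel \<Otimes>\<^sub>M borel)"
    "{p::real \<times> real. snd p < fst p} \<in> sets (borel \<Otimes>\<^sub>M borel)"
    by (simp_all add: Measurable.pred_def space_pair_measure)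
qed

locale atomless_real_distribution = real_distribution +
  assumes atomless: "atomless M"
begin

lemma measure_singleton [simp]: "measure M {x} = 0"
  using atomless unfolding atomless_def by (simp add: measure_def)

lemma continuous_cdf_of [continuous_intros]: "continuous_on S (cdf_of M)"
proof -
  have "cdf_of M = cdf M" by (auto simp: cdf_of_def cdf_def2 fun_eq_iff)
  then have "continuous_on UNIV (cdf_of M)"
    by (auto intro!: continuous_at_imp_continuous_on simp: isCont_cdf)
  then show ?thesis by (rule continuous_on_subset) simp
qed

lemma borel_measurable_cdf_of [measurable]: "cdf_of M \<in> borel_measurable borel"
  by (rule borel_measurable_continuous_onI) (rule continuous_cdf_of)

lemma cdf_of_mono: "u \<le> v \<Longrightarrow> cdf_of M u \<le> cdf_of M v"
  unfolding cdf_of_def by (intro finite_measure_mono) auto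

lemma measure_Ioc_cdf_of: "u \<le> v \<Longrightarrow> measure M {u<..v} = cdf_of M v - cdf_of M u"
proof -
  assume "u \<le> v"
  then have "{u<..v} = {..v} - {..u}" by auto
  with \<open>u \<le> v\<close> show ?thesis by (simp add: finite_measure_Diff cdf_of_def)
qed

lemma measure_Ioo_cdf_of: "u \<le> v \<Longrightarrow> measure M {u<..<v} = cdf_of M v - cdf_of M u"
proof (cases "u = v")
  case False
  assume "u \<le> v"
  with False have "{u<..<v} = {u<..v} - {v}" by auto
  with False \<open>u \<le> v\<close> show ?thesis
    by (simp add: finite_measure_Diff measure_Ioc_cdf_of)
qed simp

lemma stieltjes_on_cdf_of: "x \<le> y \<Longrightarrow> stieltjes_on M (cdf_of M) x y"
  by unfold_locales
    (auto intro!: continuous_cdf_of mono_onI cdf_of_mono simp: emeasure_eq_measure measure_Ioc_cdf_of)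

end

section \<open>Maximal positivity intervals\<close>

locale positivity_interval =
  \<mu>: atomless_real_distribution \<mu> + \<nu>: atomless_real_distribution \<nu>
  for \<mu> \<nu> :: "real measure" +
  fixes a b :: real
  assumes a_less_b: "a < b"
    and gap_at_a: "cdf_of \<mu> a - cdf_of \<nu> a = 0"
    and gap_at_b: "cdf_of \<mu> b - cdf_of \<nu> b = 0"
    and gap_positive: "\<forall>x\<in>{a<..<b}. cdf_of \<mu> x - cdf_of \<nu> x > 0"
begin

definition gap :: "real \<Rightarrow> real" where
  "gap x = cdf_of \<mu> x - cdf_of \<nu> x"

lemma continuous_gap [continuous_intros]: "continuous_on S gap"
  unfolding gap_def[abs_def] by (intro continuous_intros)

lemma borel_measurable_gap [measurable]: "gap \<in> borel_measurable borel"
  unfolding gap_def[abs_def] by measurable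

lemma gap_pos: "x \<in> {a<..<b} \<Longrightarrow> 0 < gap x"
  using gap_positive by (simp add: gap_def)

lemma gap_a: "gap a = 0" and gap_b: "gap b = 0"
  using gap_at_a gap_at_b by (simp_all add: gap_def)

lemma gap_diff: "u \<le> v \<Longrightarrow> gap v - gap u = measure \<mu> {u<..v} - measure \<nu> {u<..v}"
  by (simp add: gap_def \<mu>.measure_Ioc_cdf_of \<nu>.measure_Ioc_cdf_of)

lemma gap_le_cdf_of: "a \<le> x \<Longrightarrow> gap x \<le> cdf_of \<mu> x - cdf_of \<mu> a"
  using gap_diff[of a x] gap_a \<mu>.measure_Ioc_cdf_of[of a x] by simp

lemma gap_bounded_below:
  assumes "a < p" "q < b"
  obtains \<delta> where "\<delta> > 0" "\<And>t. t \<in> {p..q} \<Longrightarrow> \<delta> \<le> gap t"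
proof (cases "p \<le> q")
  case True
  then obtain t0 where "t0 \<in> {p..q}" "\<forall>t\<in>{p..q}. gap t0 \<le> gap t"
    using continuous_attains_inf[of "{p..q}" gap] continuous_gap by auto
  moreover have "0 < gap t0" using assms \<open>t0 \<in> {p..q}\<close> by (intro gap_pos) auto
  ultimately show ?thesis using that by blast
qed (use that[of 1] in auto)

definition dPhi :: "real measure" where
  "dPhi = density \<mu> (\<lambda>t. ennreal (indicator {a<..<b} t * inverse (gap t)))"

lemma sets_dPhi [simp, measurable_cong]: "sets dPhi = sets borel"
  by (simp add: dPhi_def)

lemma sigma_finite_dPhi: "sigma_finite_measure dPhi"
  unfolding dPhi_def
  using sigma_finite_measure.sigma_finite_iff_density_finite[OF \<mu>.sigma_finite_measure_axioms]
  by simp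

lemma nn_integral_dPhi:
  "g \<in> borel_measurable borel \<Longrightarrow>
    (\<integral>\<^sup>+t. g t \<partial>dPhi) = (\<integral>\<^sup>+t. ennreal (indicator {a<..<b} t * inverse (gap t)) * g t \<partial>\<mu>)"
  unfolding dPhi_def by (subst nn_integral_density) (auto cong: measurable_cong_sets)

lemma emeasure_dPhi_le:
  assumes "a < p" "p \<le> u" "u \<le> v" "v \<le> q" "q < b" "\<delta> > 0" "\<And>t. t \<in> {p..q} \<Longrightarrow> \<delta> \<le> gap t"
  shows "emeasure dPhi {u<..v} \<le> ennreal ((cdf_of \<mu> v - cdf_of \<mu> u) / \<delta>)"
proof -
  have "emeasure dPhi {u<..v} = (\<integral>\<^sup>+t. ennreal (indicator {a<..<b} t * inverse (gap t)) * indicator {u<..v} t \<partial>\<mu>)"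
    by (simp add: nn_integral_dPhi flip: nn_integral_indicator)
  also have "\<dots> \<le> (\<integral>\<^sup>+t. ennreal (inverse \<delta>) * indicator {u<..v} t \<partial>\<mu>)"
  proof (intro nn_integral_mono)
    fix t
    show "ennreal (indicator {a<..<b} t * inverse (gap t)) * indicator {u<..v} t \<le> ennreal (inverse \<delta>) * indicator {u<..v} t"
    proof (cases "t \<in> {u<..v}")
      case True
      then have "inverse (gap t) \<le> inverse \<delta>" and "t \<in> {a<..<b}"
        using assms by (auto intro!: le_imp_inverse_le)
      then show ?thesis using True by (simp add: ennreal_leI)
    qed simp
  qed
  also have "\<dots> = ennreal ((cdf_of \<mu> v - cdf_of \<mu> u) / \<delta>)"
    using assms \<mu>.measure_Ioc_cdf_of[of u v]
    by (simp add: nn_integral_cmult_indicator \<mu>.emeasure_eq_measure ennreal_mult'[symmetric] divide_inverse mult.commute)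
  finally show ?thesis .
qed

lemma emeasure_dPhi_finite:
  assumes "a < u" "u \<le> v" "v < b"
  shows "emeasure dPhi {u<..v} < \<infinity>"
proof -
  obtain \<delta> where "\<delta> > 0" "\<And>t. t \<in> {u..v} \<Longrightarrow> \<delta> \<le> gap t"
    using gap_bounded_below assms by metis
  then have "emeasure dPhi {u<..v} \<le> ennreal ((cdf_of \<mu> v - cdf_of \<mu> u) / \<delta>)"
    using assms by (intro emeasure_dPhi_le) auto
  then show ?thesis by (rule le_less_trans) simp
qed

text \<open>\<open>dPhi\<close> has infinite mass near \<open>a\<close> and \<open>b\<close>, so its distribution function is normalised
  at the midpoint.\<close>
definition Phi :: "real \<Rightarrow> real" where
  "Phi y = measure dPhi {(a + b) / 2<..y} - measure dPhi {y<..(a + b) / 2}"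

lemma measure_dPhi_add:
  assumes "a < u" "u \<le> v" "v \<le> w" "w < b"
  shows "measure dPhi {u<..w} = measure dPhi {u<..v} + measure dPhi {v<..w}"
proof -
  have "{u<..w} = {u<..v} \<union> {v<..w}" using assms by auto
  then show ?thesis
    using assms emeasure_dPhi_finite[of u v] emeasure_dPhi_finite[of v w]
    by (simp add: measure_Union)
qed

lemma Phi_diff: "a < u \<Longrightarrow> u \<le> v \<Longrightarrow> v < b \<Longrightarrow> Phi v - Phi u = measure dPhi {u<..v}"
  unfolding Phi_def
  using measure_dPhi_add[of "(a + b) / 2" u v] measure_dPhi_add[of u "(a + b) / 2" v]
    measure_dPhi_add[of u v "(a + b) / 2"]
  by (cases "(a + b) / 2 \<le> u"; cases "(a + b) / 2 \<le> v") auto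

lemma emeasure_dPhi_Ioc: "a < u \<Longrightarrow> u \<le> v \<Longrightarrow> v < b \<Longrightarrow> emeasure dPhi {u<..v} = ennreal (Phi v - Phi u)"
  using emeasure_dPhi_finite by (simp add: Phi_diff emeasure_eq_ennreal_measure less_top)

lemma Phi_mono: "a < u \<Longrightarrow> u \<le> v \<Longrightarrow> v < b \<Longrightarrow> Phi u \<le> Phi v"
  using Phi_diff[of u v] measure_nonneg[of dPhi "{u<..v}"] by linarith

lemma borel_measurable_Phi [measurable]: "Phi \<in> borel_measurable borel"
proof -
  have [measurable]: "(\<lambda>y. emeasure dPhi {t. (a + b) / 2 < t \<and> t \<le> y}) \<in> borel_measurable borel"
    by (rule borel_measurable_emeasure_section[OF sigma_finite_dPhi sets_dPhi,
          where P="\<lambda>y t. (a + b) / 2 < t \<and> t \<le> y"]) measurable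
  have [measurable]: "(\<lambda>y. emeasure dPhi {t. y < t \<and> t \<le> (a + b) / 2}) \<in> borel_measurable borel"
    by (rule borel_measurable_emeasure_section[OF sigma_finite_dPhi sets_dPhi,
          where P="\<lambda>y t. y < t \<and> t \<le> (a + b) / 2"]) measurable
  have sections: "{(a + b) / 2<..y} = {t. (a + b) / 2 < t \<and> t \<le> y}"
    "{y<..(a + b) / 2} = {t. y < t \<and> t \<le> (a + b) / 2}" for y
    by auto
  show ?thesis
    unfolding Phi_def[abs_def] measure_def sections by measurable
qed

lemma Phi_diff_le_cdf_of:
  assumes "a < p" "p \<le> u" "u \<le> v" "v \<le> q" "q < b" "\<delta> > 0" "\<And>t. t \<in> {p..q} \<Longrightarrow> \<delta> \<le> gap t"
  shows "\<bar>Phi v - Phi u\<bar> \<le> \<bar>cdf_of \<mu> v - cdf_of \<mu> u\<bar> / \<delta>"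
proof -
  have "ennreal (Phi v - Phi u) \<le> ennreal ((cdf_of \<mu> v - cdf_of \<mu> u) / \<delta>)"
    using assms emeasure_dPhi_Ioc[of u v] emeasure_dPhi_le[of p u v q \<delta>] by auto
  then show ?thesis
    using assms Phi_mono[of u v] \<mu>.cdf_of_mono[of u v] by (simp add: ennreal_le_iff)
qed

lemma continuous_Phi: "continuous_on {a<..<b} Phi"
proof (intro continuous_at_imp_continuous_on ballI)
  fix y assume y: "y \<in> {a<..<b}"
  define p q where "p = (a + y) / 2" and "q = (y + b) / 2"
  have pq: "a < p" "p < y" "y < q" "q < b" using y by (auto simp: p_def q_def)
  obtain \<delta> where \<delta>: "\<delta> > 0" "\<And>t. t \<in> {p..q} \<Longrightarrow> \<delta> \<le> gap t"
    using gap_bounded_below[of p q] pq by auto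
  have Phi_dist: "\<bar>Phi t - Phi y\<bar> \<le> \<bar>cdf_of \<mu> t - cdf_of \<mu> y\<bar> / \<delta>" if "t \<in> {p<..<q}" for t
  proof (cases "y \<le> t")
    case False
    then show ?thesis
      using Phi_diff_le_cdf_of[of p t y q \<delta>] that pq \<delta>
      by (simp add: abs_minus_commute[of "Phi t"] abs_minus_commute[of "cdf_of \<mu> t"])
  qed (use Phi_diff_le_cdf_of[of p y t q \<delta>] that pq \<delta> in auto)
  have "isCont (cdf_of \<mu>) y"
    using \<mu>.continuous_cdf_of[of UNIV] by (simp add: continuous_on_eq_continuous_at)
  then have "((\<lambda>t. \<bar>cdf_of \<mu> t - cdf_of \<mu> y\<bar> / \<delta>) \<longlongrightarrow> \<bar>cdf_of \<mu> y - cdf_of \<mu> y\<bar> / \<delta>) (at y)"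
    using \<delta>(1) by (intro tendsto_intros) (simp_all add: isCont_def)
  then have "((\<lambda>t. \<bar>cdf_of \<mu> t - cdf_of \<mu> y\<bar> / \<delta>) \<longlongrightarrow> 0) (at y)"
    by simp
  moreover have "eventually (\<lambda>t. norm (Phi t - Phi y) \<le> \<bar>cdf_of \<mu> t - cdf_of \<mu> y\<bar> / \<delta>) (at y)"
    using eventually_at_in_open'[of "{p<..<q}" y] pq by (auto elim!: eventually_mono intro: Phi_dist)
  ultimately have "((\<lambda>t. Phi t - Phi y) \<longlongrightarrow> 0) (at y)"
    by (rule Lim_null_comparison[rotated])
  then show "isCont Phi y" by (simp add: isCont_def LIM_zero_iff)
qed

lemma continuous_on_Phi [continuous_intros]: "S \<subseteq> {a<..<b} \<Longrightarrow> continuous_on S Phi"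
  using continuous_Phi continuous_on_subset by blast

lemma stieltjes_on_dPhi: "a < x \<Longrightarrow> x \<le> y \<Longrightarrow> y < b \<Longrightarrow> stieltjes_on dPhi Phi x y"
  by unfold_locales (auto intro!: continuous_intros mono_onI Phi_mono emeasure_dPhi_Ioc)

lemma cdf_of_minus_cdf_of_a_pos: "t \<in> {a<..<b} \<Longrightarrow> 0 < cdf_of \<mu> t - cdf_of \<mu> a"
  using gap_pos[of t] gap_le_cdf_of[of t] by auto

text \<open>Since \<open>\<F> \<le> F\<^sub>\<mu> - F\<^sub>\<mu>(a)\<close>, \<open>\<Phi>\<close> grows at least like \<open>ln (F\<^sub>\<mu> - F\<^sub>\<mu>(a))\<close>.\<close>
lemma exp_Phi_mult_le:
  assumes "a < x" "x \<le> y" "y < b"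
  shows "exp (Phi x) * (cdf_of \<mu> y - cdf_of \<mu> a) \<le> exp (Phi y) * (cdf_of \<mu> x - cdf_of \<mu> a)"
proof -
  define C where "C = cdf_of \<mu> a"
  have pos: "0 < cdf_of \<mu> x - C" "0 < cdf_of \<mu> y - C"
    using assms cdf_of_minus_cdf_of_a_pos[of x] cdf_of_minus_cdf_of_a_pos[of y] by (auto simp: C_def)
  interpret stieltjes_on \<mu> "cdf_of \<mu>" x y
    using assms by (intro \<mu>.stieltjes_on_cdf_of) simp
  have "ennreal (ln (cdf_of \<mu> y - C) - ln (cdf_of \<mu> x - C))
      = (\<integral>\<^sup>+t. ennreal (inverse (cdf_of \<mu> t - C)) * indicator {x<..y} t \<partial>\<mu>)"
    using pos by (intro nn_integral_FTC[symmetric]) (auto intro!: derivative_eq_intros simp: field_simps)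
  also have "\<dots> \<le> (\<integral>\<^sup>+t. ennreal (indicator {a<..<b} t * inverse (gap t)) * indicator {x<..y} t \<partial>\<mu>)"
  proof (intro nn_integral_mono)
    fix t
    show "ennreal (inverse (cdf_of \<mu> t - C)) * indicator {x<..y} t
      \<le> ennreal (indicator {a<..<b} t * inverse (gap t)) * indicator {x<..y} t"
    proof (cases "t \<in> {x<..y}")
      case True
      then have "t \<in> {a<..<b}" using assms by auto
      then have "inverse (cdf_of \<mu> t - C) \<le> inverse (gap t)"
        using gap_pos gap_le_cdf_of[of t] by (intro le_imp_inverse_le) (auto simp: C_def)
      then show ?thesis using True \<open>t \<in> {a<..<b}\<close> by (simp add: ennreal_leI)
    qed simp
  qed
  also have "\<dots> = emeasure dPhi {x<..y}"
    by (simp add: nn_integral_dPhi flip: nn_integral_indicator)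
  also have "\<dots> = ennreal (Phi y - Phi x)"
    using assms by (rule emeasure_dPhi_Ioc)
  finally have "ln (cdf_of \<mu> y - C) - ln (cdf_of \<mu> x - C) \<le> Phi y - Phi x"
    using Phi_mono[OF assms] by (simp add: ennreal_le_iff)
  then have "exp (Phi x + ln (cdf_of \<mu> y - C)) \<le> exp (Phi y + ln (cdf_of \<mu> x - C))"
    by simp
  then show ?thesis
    using pos by (simp add: exp_add C_def)
qed

lemma tendsto_exp_Phi_at_right: "((\<lambda>x. exp (Phi x)) \<longlongrightarrow> 0) (at_right a)"
proof -
  define y where "y = (a + b) / 2"
  have y: "a < y" "y < b" using a_less_b by (auto simp: y_def)
  define K where "K = exp (Phi y) / (cdf_of \<mu> y - cdf_of \<mu> a)"
  have "isCont (cdf_of \<mu>) a"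
    using \<mu>.continuous_cdf_of[of UNIV] by (simp add: continuous_on_eq_continuous_at)
  then have "(cdf_of \<mu> \<longlongrightarrow> cdf_of \<mu> a) (at_right a)"
    by (simp add: isCont_def filterlim_at_split)
  then have "((\<lambda>x. K * (cdf_of \<mu> x - cdf_of \<mu> a)) \<longlongrightarrow> K * (cdf_of \<mu> a - cdf_of \<mu> a)) (at_right a)"
    by (intro tendsto_intros)
  then have upper_lim: "((\<lambda>x. K * (cdf_of \<mu> x - cdf_of \<mu> a)) \<longlongrightarrow> 0) (at_right a)"
    by simp
  have "exp (Phi x) \<le> K * (cdf_of \<mu> x - cdf_of \<mu> a)" if "a < x" "x < y" for x
  proof -
    have "exp (Phi x) * (cdf_of \<mu> y - cdf_of \<mu> a) \<le> exp (Phi y) * (cdf_of \<mu> x - cdf_of \<mu> a)"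
      using exp_Phi_mult_le[of x y] that y by auto
    then show ?thesis
      using cdf_of_minus_cdf_of_a_pos[of y] y by (simp add: K_def field_simps)
  qed
  then have "eventually (\<lambda>x. exp (Phi x) \<le> K * (cdf_of \<mu> x - cdf_of \<mu> a)) (at_right a)"
    using eventually_at_right_real[OF y(1)] by (auto elim!: eventually_mono)
  then show ?thesis
    by (intro tendsto_sandwich[OF _ _ tendsto_const upper_lim]) auto
qed

lemma tendsto_gap_exp_neg_Phi_at_left: "((\<lambda>y. gap y * exp (- Phi y)) \<longlongrightarrow> 0) (at_left b)"
proof -
  define x where "x = (a + b) / 2"
  have x: "a < x" "x < b" using a_less_b by (auto simp: x_def)
  have "isCont gap b"
    using continuous_gap[of UNIV] by (simp add: continuous_on_eq_continuous_at)
  then have "(gap \<longlongrightarrow> gap b) (at_left b)"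
    by (simp add: isCont_def filterlim_at_split)
  then have "((\<lambda>y. gap y * exp (- Phi x)) \<longlongrightarrow> gap b * exp (- Phi x)) (at_left b)"
    by (intro tendsto_intros)
  then have upper_lim: "((\<lambda>y. gap y * exp (- Phi x)) \<longlongrightarrow> 0) (at_left b)"
    by (simp add: gap_b)
  have "0 \<le> gap y * exp (- Phi y) \<and> gap y * exp (- Phi y) \<le> gap y * exp (- Phi x)"
    if "y \<in> {x<..<b}" for y
    using that x gap_pos[of y] Phi_mono[of x y] by auto
  then have "eventually (\<lambda>y. 0 \<le> gap y * exp (- Phi y) \<and> gap y * exp (- Phi y) \<le> gap y * exp (- Phi x)) (at_left b)"
    using eventually_at_left_real[OF x(2)] by (auto elim!: eventually_mono)
  then show ?thesis
    by (intro tendsto_sandwich[OF _ _ tendsto_const upper_lim]) (auto elim: eventually_mono)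
qed

definition rho1 :: "real measure" where
  "rho1 = density \<mu> (\<lambda>t. ennreal (indicator {a<..<b} t * inverse (gap t) * exp (Phi t)))"

definition rho2 :: "real measure" where
  "rho2 = density \<nu> (\<lambda>t. ennreal (indicator {a<..<b} t * exp (- Phi t)))"

lemma sets_rho [simp, measurable_cong]: "sets rho1 = sets borel" "sets rho2 = sets borel"
  by (simp_all add: rho1_def rho2_def)

lemma sigma_finite_rho: "sigma_finite_measure rho1" "sigma_finite_measure rho2"
  unfolding rho1_def rho2_def
  using sigma_finite_measure.sigma_finite_iff_density_finite[OF \<mu>.sigma_finite_measure_axioms]
    sigma_finite_measure.sigma_finite_iff_density_finite[OF \<nu>.sigma_finite_measure_axioms]
  by simp_all

lemma AE_rho:
  "AE t in rho1. t \<in> {a<..<b} \<and> t \<noteq> z" "AE t in rho2. t \<in> {a<..<b} \<and> t \<noteq> z"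
proof -
  have supp: "AE t in M. 0 < ennreal (indicator {a<..<b} t * f t) \<longrightarrow> t \<in> {a<..<b} \<and> t \<noteq> z"
    if "atomless M" "sets M = sets borel" for M :: "real measure" and f
  proof -
    have "{z} \<in> null_sets M"
      using that by (auto simp: atomless_def null_sets_def)
    then show ?thesis
      by (rule AE_mp[OF AE_not_in]) (auto intro!: AE_I2 simp: indicator_def)
  qed
  show "AE t in rho1. t \<in> {a<..<b} \<and> t \<noteq> z"
    unfolding rho1_def using supp[OF \<mu>.atomless \<mu>.events_eq_borel, of "\<lambda>t. inverse (gap t) * exp (Phi t)"]
    by (subst AE_density) (simp_all only: mult.assoc, measurable)
  show "AE t in rho2. t \<in> {a<..<b} \<and> t \<noteq> z"
    unfolding rho2_def
    by (subst AE_density) (measurable, rule supp[OF \<nu>.atomless \<nu>.events_eq_borel])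
qed

lemma emeasure_rho_outside: "emeasure rho1 (UNIV - {a<..<b}) = 0" "emeasure rho2 (UNIV - {a<..<b}) = 0"
proof -
  have "emeasure rho1 (UNIV - {a<..<b}) = emeasure rho1 {}"
    using AE_rho(1)[of 0] by (intro emeasure_eq_AE) (auto elim: AE_mp)
  moreover have "emeasure rho2 (UNIV - {a<..<b}) = emeasure rho2 {}"
    using AE_rho(2)[of 0] by (intro emeasure_eq_AE) (auto elim: AE_mp)
  ultimately show "emeasure rho1 (UNIV - {a<..<b}) = 0" "emeasure rho2 (UNIV - {a<..<b}) = 0"
    by simp_all
qed

lemma emeasure_rho1_Ioc:
  assumes "a < x" "x \<le> y" "y < b"
  shows "emeasure rho1 {x<..y} = ennreal (exp (Phi y) - exp (Phi x))"
proof -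
  interpret stieltjes_on dPhi Phi x y
    using assms by (rule stieltjes_on_dPhi)
  have "emeasure rho1 {x<..y} = (\<integral>\<^sup>+t. ennreal (exp (Phi t)) * indicator {x<..y} t \<partial>dPhi)"
    using assms unfolding rho1_def
    by (auto simp: emeasure_density nn_integral_dPhi ennreal_mult'' indicator_def mult_ac
        intro!: nn_integral_cong)
  also have "\<dots> = ennreal (exp (Phi y) - exp (Phi x))"
    by (intro nn_integral_FTC) (auto intro!: derivative_eq_intros)
  finally show ?thesis .
qed

lemma emeasure_rho1_Ioc_a:
  assumes "y \<in> {a<..<b}"
  shows "emeasure rho1 {a<..y} = ennreal (exp (Phi y))"
proof (rule tendsto_unique[OF trivial_limit_at_right_real])
  show "((\<lambda>x. emeasure rho1 {x<..y}) \<longlongrightarrow> emeasure rho1 {a<..y}) (at_right a)"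
    using assms by (intro tendsto_emeasure_Ioc_at_right) auto
  have "((\<lambda>x. ennreal (exp (Phi y) - exp (Phi x))) \<longlongrightarrow> ennreal (exp (Phi y) - 0)) (at_right a)"
    by (intro tendsto_ennrealI tendsto_intros tendsto_exp_Phi_at_right)
  moreover have "eventually (\<lambda>x. ennreal (exp (Phi y) - exp (Phi x)) = emeasure rho1 {x<..y}) (at_right a)"
    using eventually_at_right_real[of a y] assms
    by (auto elim!: eventually_mono simp: emeasure_rho1_Ioc)
  ultimately show "((\<lambda>x. emeasure rho1 {x<..y}) \<longlongrightarrow> ennreal (exp (Phi y))) (at_right a)"
    by (simp add: tendsto_cong)
qed

lemma nn_integral_exp_neg_Phi:
  assumes "a < x" "x \<le> y" "y < b"
  shows "(\<integral>\<^sup>+s. ennreal (exp (- Phi s)) * indicator {x<..y} s \<partial>dPhi) = ennreal (exp (- Phi x) - exp (- Phi y))"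
proof -
  interpret stieltjes_on dPhi Phi x y
    using assms by (rule stieltjes_on_dPhi)
  have "(\<integral>\<^sup>+s. ennreal (exp (- Phi s)) * indicator {x<..y} s \<partial>dPhi)
      = ennreal ((\<lambda>s. - exp (- s)) (Phi y) - (\<lambda>s. - exp (- s)) (Phi x))"
    by (intro nn_integral_FTC[where g="\<lambda>s. exp (- s)"]) (auto intro!: derivative_eq_intros)
  then show ?thesis by simp
qed

lemma nn_integral_exp_neg_Phi_by_parts:
  assumes "atomless_real_distribution \<sigma>" "a < x" "x \<le> y" "y < b"
  shows "(\<integral>\<^sup>+t. ennreal (exp (- Phi t)) * indicator {x<..y} t \<partial>\<sigma>) =
    ennreal (exp (- Phi y) * measure \<sigma> {x<..y}) +
    (\<integral>\<^sup>+s. ennreal (exp (- Phi s) * (cdf_of \<sigma> s - cdf_of \<sigma> x)) * indicator {x<..y} s \<partial>dPhi)"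
proof -
  interpret \<sigma>: atomless_real_distribution \<sigma> by fact
  have "(\<integral>\<^sup>+t. ennreal (exp (- Phi t)) * indicator {x<..y} t \<partial>\<sigma>) =
     ennreal (exp (- Phi y)) * emeasure \<sigma> {x<..y} +
     (\<integral>\<^sup>+s. ennreal (exp (- Phi s)) * indicator {x<..y} s * emeasure \<sigma> {x<..<s} \<partial>dPhi)"
  proof (rule nn_integral_Ioc_by_parts)
    show "ennreal (exp (- Phi t)) =
      ennreal (exp (- Phi y)) + (\<integral>\<^sup>+s. ennreal (exp (- Phi s)) * indicator {t<..y} s \<partial>dPhi)"
      if "x \<le> t" "t \<le> y" for t
      using that assms Phi_mono[of t y]
      by (simp add: nn_integral_exp_neg_Phi ennreal_plus[symmetric] del: ennreal_plus)
  qed (simp_all add: sigma_finite_dPhi \<sigma>.sigma_finite_measure_axioms)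
  also have "ennreal (exp (- Phi y)) * emeasure \<sigma> {x<..y} = ennreal (exp (- Phi y) * measure \<sigma> {x<..y})"
    by (simp add: \<sigma>.emeasure_eq_measure ennreal_mult)
  also have "(\<integral>\<^sup>+s. ennreal (exp (- Phi s)) * indicator {x<..y} s * emeasure \<sigma> {x<..<s} \<partial>dPhi)
    = (\<integral>\<^sup>+s. ennreal (exp (- Phi s) * (cdf_of \<sigma> s - cdf_of \<sigma> x)) * indicator {x<..y} s \<partial>dPhi)"
    by (intro nn_integral_cong)
      (auto simp: indicator_def \<sigma>.emeasure_eq_measure \<sigma>.measure_Ioo_cdf_of ennreal_mult \<sigma>.cdf_of_mono)
  finally show ?thesis .
qed

lemma nn_integral_exp_neg_Phi_gap:
  assumes "a < x" "y < b"
  shows "(\<integral>\<^sup>+s. ennreal (exp (- Phi s) * gap s) * indicator {x<..y} s \<partial>dPhi)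
    = (\<integral>\<^sup>+t. ennreal (exp (- Phi t)) * indicator {x<..y} t \<partial>\<mu>)"
proof -
  have "ennreal (indicator {a<..<b} t * inverse (gap t)) * (ennreal (exp (- Phi t) * gap t) * indicator {x<..y} t)
      = ennreal (exp (- Phi t)) * indicator {x<..y} t" for t
  proof (cases "t \<in> {x<..y}")
    case True
    then have "indicator {a<..<b} t * inverse (gap t) * (exp (- Phi t) * gap t) = exp (- Phi t)"
      using assms gap_pos[of t] by simp
    then show ?thesis
      using True assms gap_pos[of t] by (simp add: ennreal_mult''[symmetric])
  qed simp
  then show ?thesis
    by (simp add: nn_integral_dPhi)
qed

lemma nn_integral_exp_neg_Phi_finite:
  assumes "finite_measure \<sigma>" "sets \<sigma> = sets borel" "a < x" "y < b"
  shows "(\<integral>\<^sup>+t. ennreal (exp (- Phi t)) * indicator {x<..y} t \<partial>\<sigma>) < \<infinity>"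
proof -
  have "(\<integral>\<^sup>+t. ennreal (exp (- Phi t)) * indicator {x<..y} t \<partial>\<sigma>)
      \<le> (\<integral>\<^sup>+t. ennreal (exp (- Phi x)) * indicator {x<..y} t \<partial>\<sigma>)"
    using Phi_mono[of x] assms by (intro nn_integral_mono) (auto simp: indicator_def)
  also have "\<dots> = ennreal (exp (- Phi x)) * emeasure \<sigma> {x<..y}"
    using assms by (simp add: nn_integral_cmult_indicator)
  also have "\<dots> < \<infinity>"
    using finite_measure.emeasure_finite[OF assms(1)] by (simp add: ennreal_mult_less_top less_top)
  finally show ?thesis .
qed

lemma nn_integral_exp_neg_Phi_cdf_exchange:
  assumes xy: "a < x" "x \<le> y" "y < b"
  shows "(\<integral>\<^sup>+s. ennreal (exp (- Phi s) * (cdf_of \<nu> s - cdf_of \<nu> x)) * indicator {x<..y} s \<partial>dPhi)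
      + (\<integral>\<^sup>+t. ennreal (exp (- Phi t)) * indicator {x<..y} t \<partial>\<mu>)
    = (\<integral>\<^sup>+s. ennreal (exp (- Phi s) * (cdf_of \<mu> s - cdf_of \<mu> x)) * indicator {x<..y} s \<partial>dPhi)
      + ennreal (gap x * (exp (- Phi x) - exp (- Phi y)))"
proof -
  have "(\<integral>\<^sup>+s. ennreal (exp (- Phi s) * (cdf_of \<nu> s - cdf_of \<nu> x)) * indicator {x<..y} s \<partial>dPhi)
      + (\<integral>\<^sup>+t. ennreal (exp (- Phi t)) * indicator {x<..y} t \<partial>\<mu>)
    = (\<integral>\<^sup>+s. (ennreal (exp (- Phi s) * (cdf_of \<nu> s - cdf_of \<nu> x))
        + ennreal (exp (- Phi s) * gap s)) * indicator {x<..y} s \<partial>dPhi)"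
    using xy by (simp add: nn_integral_exp_neg_Phi_gap[symmetric] distrib_right nn_integral_add)
  also have "\<dots> = (\<integral>\<^sup>+s. ennreal (exp (- Phi s) * (cdf_of \<mu> s - cdf_of \<mu> x)) * indicator {x<..y} s
      + ennreal (gap x) * (ennreal (exp (- Phi s)) * indicator {x<..y} s) \<partial>dPhi)"
  proof (intro nn_integral_cong)
    fix s
    show "(ennreal (exp (- Phi s) * (cdf_of \<nu> s - cdf_of \<nu> x)) + ennreal (exp (- Phi s) * gap s)) * indicator {x<..y} s
      = ennreal (exp (- Phi s) * (cdf_of \<mu> s - cdf_of \<mu> x)) * indicator {x<..y} s
        + ennreal (gap x) * (ennreal (exp (- Phi s)) * indicator {x<..y} s)"
    proof (cases "s \<in> {x<..y}")
      case True
      then have "0 \<le> cdf_of \<nu> s - cdf_of \<nu> x" "0 \<le> cdf_of \<mu> s - cdf_of \<mu> x" "0 < gap s" "0 < gap x"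
        using xy \<mu>.cdf_of_mono[of x s] \<nu>.cdf_of_mono[of x s] gap_pos[of s] gap_pos[of x] by auto
      moreover have "exp (- Phi s) * (cdf_of \<nu> s - cdf_of \<nu> x) + exp (- Phi s) * gap s
        = exp (- Phi s) * (cdf_of \<mu> s - cdf_of \<mu> x) + gap x * exp (- Phi s)"
        by (simp add: gap_def algebra_simps)
      ultimately show ?thesis
        using True by (simp add: ennreal_plus[symmetric] ennreal_mult[symmetric] del: ennreal_plus)
    qed simp
  qed
  also have "\<dots> = (\<integral>\<^sup>+s. ennreal (exp (- Phi s) * (cdf_of \<mu> s - cdf_of \<mu> x)) * indicator {x<..y} s \<partial>dPhi)
      + ennreal (gap x) * (\<integral>\<^sup>+s. ennreal (exp (- Phi s)) * indicator {x<..y} s \<partial>dPhi)"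
    by (simp add: nn_integral_add nn_integral_cmult)
  also have "\<dots> = (\<integral>\<^sup>+s. ennreal (exp (- Phi s) * (cdf_of \<mu> s - cdf_of \<mu> x)) * indicator {x<..y} s \<partial>dPhi)
      + ennreal (gap x * (exp (- Phi x) - exp (- Phi y)))"
    using xy gap_pos[of x] by (simp add: nn_integral_exp_neg_Phi ennreal_mult')
  finally show ?thesis .
qed

text \<open>The product rule \<open>d(\<F> exp (-\<Phi>)) = exp (-\<Phi>) (d\<mu> - d\<nu>) - \<F> exp (-\<Phi>) d\<Phi> = - exp (-\<Phi>) d\<nu>\<close>,
  integrated by parts against \<open>\<mu>\<close> and \<open>\<nu>\<close>.\<close>
lemma emeasure_rho2_Ioc:
  assumes xy: "a < x" "x \<le> y" "y < b"
  shows "emeasure rho2 {x<..y} = ennreal (gap x * exp (- Phi x) - gap y * exp (- Phi y))"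
proof -
  define I where "I \<sigma> = (\<integral>\<^sup>+t. ennreal (exp (- Phi t)) * indicator {x<..y} t \<partial>\<sigma>)" for \<sigma>
  define J where "J \<sigma> = (\<integral>\<^sup>+s. ennreal (exp (- Phi s) * (cdf_of \<sigma> s - cdf_of \<sigma> x)) * indicator {x<..y} s \<partial>dPhi)" for \<sigma>
  have I_\<mu>: "I \<mu> = ennreal (exp (- Phi y) * measure \<mu> {x<..y}) + J \<mu>"
    and I_\<nu>: "I \<nu> = ennreal (exp (- Phi y) * measure \<nu> {x<..y}) + J \<nu>"
    unfolding I_def J_def
    by (rule nn_integral_exp_neg_Phi_by_parts[OF \<mu>.atomless_real_distribution_axioms xy]
             nn_integral_exp_neg_Phi_by_parts[OF \<nu>.atomless_real_distribution_axioms xy])+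
  have JI: "J \<nu> + I \<mu> = J \<mu> + ennreal (gap x * (exp (- Phi x) - exp (- Phi y)))"
    unfolding I_def J_def by (rule nn_integral_exp_neg_Phi_cdf_exchange[OF xy])
  have finite: "I \<mu> < \<infinity>" "I \<nu> < \<infinity>"
    unfolding I_def using xy
    by (intro nn_integral_exp_neg_Phi_finite; simp add: \<mu>.finite_measure_axioms \<nu>.finite_measure_axioms)+
  have J_finite: "J \<mu> < \<infinity>" "J \<nu> < \<infinity>"
    using finite unfolding I_\<mu> I_\<nu> by auto
  have "enn2real (I \<nu>) = exp (- Phi y) * measure \<nu> {x<..y} + enn2real (J \<nu>)"
    "enn2real (I \<mu>) = exp (- Phi y) * measure \<mu> {x<..y} + enn2real (J \<mu>)"
    unfolding I_\<mu> I_\<nu> using J_finite by (simp_all add: enn2real_plus)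
  moreover have "enn2real (J \<nu>) + enn2real (I \<mu>) = enn2real (J \<mu>) + gap x * (exp (- Phi x) - exp (- Phi y))"
  proof -
    have "enn2real (J \<nu> + I \<mu>) = enn2real (J \<mu> + ennreal (gap x * (exp (- Phi x) - exp (- Phi y))))"
      by (simp only: JI)
    then show ?thesis
      using J_finite finite xy gap_pos[of x] Phi_mono[OF xy] by (simp add: enn2real_plus)
  qed
  moreover have "exp (- Phi y) * (gap y - gap x) = exp (- Phi y) * (measure \<mu> {x<..y} - measure \<nu> {x<..y})"
    using xy by (simp add: gap_diff)
  ultimately have "enn2real (I \<nu>) = gap x * exp (- Phi x) - gap y * exp (- Phi y)"
    by (simp add: algebra_simps)
  moreover have "emeasure rho2 {x<..y} = I \<nu>"
    unfolding rho2_def I_def using xy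
    by (auto simp: emeasure_density indicator_def ennreal_mult''[symmetric] intro!: nn_integral_cong)
  moreover have "I \<nu> = ennreal (enn2real (I \<nu>))"
    using finite(2) by simp
  ultimately show ?thesis
    by simp
qed

lemma emeasure_rho2_Ioo_b:
  assumes "x \<in> {a<..<b}"
  shows "emeasure rho2 {x<..<b} = ennreal (gap x * exp (- Phi x))"
proof (rule tendsto_unique[OF trivial_limit_at_left_real])
  show "((\<lambda>y. emeasure rho2 {x<..y}) \<longlongrightarrow> emeasure rho2 {x<..<b}) (at_left b)"
    using assms by (intro tendsto_emeasure_Ioc_at_left) auto
  have "((\<lambda>y. ennreal (gap x * exp (- Phi x) - gap y * exp (- Phi y)))
      \<longlongrightarrow> ennreal (gap x * exp (- Phi x) - 0)) (at_left b)"
    by (intro tendsto_ennrealI tendsto_intros tendsto_gap_exp_neg_Phi_at_left)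
  moreover have "eventually (\<lambda>y. ennreal (gap x * exp (- Phi x) - gap y * exp (- Phi y))
      = emeasure rho2 {x<..y}) (at_left b)"
    using eventually_at_left_real[of x b] assms
    by (auto elim!: eventually_mono simp: emeasure_rho2_Ioc)
  ultimately show "((\<lambda>y. emeasure rho2 {x<..y}) \<longlongrightarrow> ennreal (gap x * exp (- Phi x))) (at_left b)"
    by (simp add: tendsto_cong)
qed

lemma emeasure_rho2_Ico_b:
  assumes "x \<in> {a<..<b}"
  shows "emeasure rho2 {x..<b} = ennreal (gap x * exp (- Phi x))"
proof -
  have "emeasure rho2 {x..<b} = emeasure rho2 {x<..<b}"
    using AE_rho(2)[of x] by (intro emeasure_eq_AE) (auto elim!: AE_mp)
  then show ?thesis using emeasure_rho2_Ioo_b[OF assms] by simp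
qed

lemma emeasure_rho2_greaterThan:
  assumes "x \<in> {a<..<b}"
  shows "emeasure rho2 {x<..} = ennreal (gap x * exp (- Phi x))"
proof -
  have "emeasure rho2 {x<..} = emeasure rho2 {x<..<b}"
    using AE_rho(2)[of x] by (intro emeasure_eq_AE) (auto elim!: AE_mp)
  then show ?thesis using emeasure_rho2_Ioo_b[OF assms] by simp
qed

lemma emeasure_rho1_lessThan:
  assumes "y \<in> {a<..<b}"
  shows "emeasure rho1 {..<y} = ennreal (exp (Phi y))"
proof -
  have "emeasure rho1 {..<y} = emeasure rho1 {a<..y}"
    using AE_rho(1)[of y] by (intro emeasure_eq_AE) (auto elim!: AE_mp)
  then show ?thesis using emeasure_rho1_Ioc_a[OF assms] by simp
qed

lemma measure_rho1_Ioc_a: "y \<in> {a<..<b} \<Longrightarrow> measure rho1 {a<..y} = exp (Phi y)"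
  by (simp add: measure_def emeasure_rho1_Ioc_a)

lemma measure_rho2_Ico_b: "x \<in> {a<..<b} \<Longrightarrow> measure rho2 {x..<b} = gap x * exp (- Phi x)"
  using gap_pos[of x] by (simp add: measure_def emeasure_rho2_Ico_b)

lemma emeasure_rho_finite:
  "\<forall>y\<in>{a<..<b}. emeasure rho1 {a<..y} < \<infinity>" "\<forall>x\<in>{a<..<b}. emeasure rho2 {x..<b} < \<infinity>"
  by (simp_all add: emeasure_rho1_Ioc_a emeasure_rho2_Ico_b)

lemma measure_rho_pos:
  "\<forall>y\<in>{a<..<b}. measure rho1 {a<..y} > 0" "\<forall>x\<in>{a<..<b}. measure rho2 {x..<b} > 0"
  by (simp_all add: measure_rho1_Ioc_a measure_rho2_Ico_b gap_pos)

lemma continuous_measure_rho: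
  "continuous_on {a<..<b} (\<lambda>y. measure rho1 {a<..y})" "continuous_on {a<..<b} (\<lambda>x. measure rho2 {x..<b})"
  by (rule continuous_on_cong[THEN iffD2, OF refl measure_rho1_Ioc_a]
        continuous_on_cong[THEN iffD2, OF refl measure_rho2_Ico_b];
      auto intro!: continuous_intros)+

lemma borel_measurable_emeasure_rho [measurable]:
  "(\<lambda>y. emeasure rho1 {a<..y}) \<in> borel_measurable borel"
  "(\<lambda>x. emeasure rho2 {x..<b}) \<in> borel_measurable borel"
proof -
  have "{a<..y} = {t. a < t \<and> t \<le> y}" "{x..<b} = {t. x \<le> t \<and> t < b}" for x y
    by auto
  moreover have "(\<lambda>y. emeasure rho1 {t. a < t \<and> t \<le> y}) \<in> borel_measurable borel"
    by (rule borel_measurable_emeasure_section[OF sigma_finite_rho(1) sets_rho(1),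
          where P="\<lambda>y t. a < t \<and> t \<le> y"]) measurable
  moreover have "(\<lambda>x. emeasure rho2 {t. x \<le> t \<and> t < b}) \<in> borel_measurable borel"
    by (rule borel_measurable_emeasure_section[OF sigma_finite_rho(2) sets_rho(2),
          where P="\<lambda>x t. x \<le> t \<and> t < b"]) measurable
  ultimately show "(\<lambda>y. emeasure rho1 {a<..y}) \<in> borel_measurable borel"
    "(\<lambda>x. emeasure rho2 {x..<b}) \<in> borel_measurable borel"
    by simp_all
qed

lemma restr_density_rho1:
  "restr (density rho1 (\<lambda>x. emeasure rho2 {x..<b})) {a<..<b} = restr \<mu> {a<..<b}"
proof -
  have "restr (density rho1 (\<lambda>x. emeasure rho2 {x..<b})) {a<..<b}
      = density \<mu> (\<lambda>x. ennreal (indicator {a<..<b} x * inverse (gap x) * exp (Phi x))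
          * (emeasure rho2 {x..<b} * indicator {a<..<b} x))"
    unfolding restr_def rho1_def by (simp add: density_density_eq mult.assoc)
  also have "\<dots> = restr \<mu> {a<..<b}"
    unfolding restr_def
  proof (intro density_cong[OF _ _ AE_I2])
    fix x show "ennreal (indicator {a<..<b} x * inverse (gap x) * exp (Phi x))
      * (emeasure rho2 {x..<b} * indicator {a<..<b} x) = indicator {a<..<b} x"
    proof (cases "x \<in> {a<..<b}")
      case True
      then have "indicator {a<..<b} x * inverse (gap x) * exp (Phi x) * (gap x * exp (- Phi x)) = 1"
        using gap_pos[of x] by (simp add: field_simps exp_minus)
      then show ?thesis
        using True gap_pos[of x] by (simp add: emeasure_rho2_Ico_b ennreal_mult''[symmetric])
    qed simp
  qed simp_all
  finally show ?thesis .
qed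

lemma restr_density_rho2:
  "restr (density rho2 (\<lambda>y. emeasure rho1 {a<..y})) {a<..<b} = restr \<nu> {a<..<b}"
proof -
  have "restr (density rho2 (\<lambda>y. emeasure rho1 {a<..y})) {a<..<b}
      = density \<nu> (\<lambda>y. ennreal (indicator {a<..<b} y * exp (- Phi y))
          * (emeasure rho1 {a<..y} * indicator {a<..<b} y))"
    unfolding restr_def rho2_def by (simp add: density_density_eq mult.assoc)
  also have "\<dots> = restr \<nu> {a<..<b}"
    unfolding restr_def
  proof (intro density_cong[OF _ _ AE_I2])
    fix y show "ennreal (indicator {a<..<b} y * exp (- Phi y))
      * (emeasure rho1 {a<..y} * indicator {a<..<b} y) = indicator {a<..<b} y"
      by (cases "y \<in> {a<..<b}")
        (simp_all add: emeasure_rho1_Ioc_a ennreal_mult''[symmetric] exp_minus)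
  qed simp_all
  finally show ?thesis .
qed

lemma rho1_marginal:
  assumes "A \<in> sets borel"
  shows "(\<integral>\<^sup>+x. indicator A x * emeasure rho2 {x<..} \<partial>rho1) = emeasure (restr \<mu> {a<..<b}) A"
proof -
  have "(\<integral>\<^sup>+x. indicator A x * emeasure rho2 {x<..} \<partial>rho1)
      = (\<integral>\<^sup>+x. emeasure rho2 {x..<b} * (indicator {a<..<b} x * indicator A x) \<partial>rho1)"
    by (rule nn_integral_cong_AE, rule AE_mp[OF AE_rho(1)[of 0]])
      (auto intro!: AE_I2 simp: emeasure_rho2_Ico_b emeasure_rho2_greaterThan mult.commute)
  also have "\<dots> = emeasure (restr (density rho1 (\<lambda>x. emeasure rho2 {x..<b})) {a<..<b}) A"
    using assms by (simp add: restr_def emeasure_density nn_integral_density)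
  finally show ?thesis by (simp only: restr_density_rho1)
qed

lemma rho2_marginal:
  assumes "B \<in> sets borel"
  shows "(\<integral>\<^sup>+y. indicator B y * emeasure rho1 {..<y} \<partial>rho2) = emeasure (restr \<nu> {a<..<b}) B"
proof -
  have "(\<integral>\<^sup>+y. indicator B y * emeasure rho1 {..<y} \<partial>rho2)
      = (\<integral>\<^sup>+y. emeasure rho1 {a<..y} * (indicator {a<..<b} y * indicator B y) \<partial>rho2)"
    by (rule nn_integral_cong_AE, rule AE_mp[OF AE_rho(2)[of 0]])
      (auto intro!: AE_I2 simp: emeasure_rho1_Ioc_a emeasure_rho1_lessThan mult.commute)
  also have "\<dots> = emeasure (restr (density rho2 (\<lambda>y. emeasure rho1 {a<..y})) {a<..<b}) B"
    using assms by (simp add: restr_def emeasure_density nn_integral_density)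
  finally show ?thesis by (simp only: restr_density_rho2)
qed

lemma restr_rho1_rho2_couplings:
  "restr (rho1 \<Otimes>\<^sub>M rho2) {p. fst p < snd p} \<in> couplings (restr \<mu> {a<..<b}) (restr \<nu> {a<..<b})"
  by (rule restr_pair_measure_in_couplings[OF sets_rho sigma_finite_rho pred_less_in_sets_pair(1)])
    (simp_all only: mem_Collect_eq fst_conv snd_conv rho1_marginal rho2_marginal
      greaterThan_def[symmetric] lessThan_def[symmetric])

lemma restr_rho2_rho1_couplings:
  "restr (rho2 \<Otimes>\<^sub>M rho1) {p. snd p < fst p} \<in> couplings (restr \<nu> {a<..<b}) (restr \<mu> {a<..<b})"
  by (rule restr_pair_measure_in_couplings[OF sets_rho(2,1) sigma_finite_rho(2,1) pred_less_in_sets_pair(2)])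
    (simp_all only: mem_Collect_eq fst_conv snd_conv rho1_marginal rho2_marginal
      greaterThan_def[symmetric] lessThan_def[symmetric])

end

lemma positivity_intervalI:
  assumes "prob_space \<mu>" "prob_space \<nu>" "sets \<mu> = sets borel" "sets \<nu> = sets borel"
    and "atomless \<mu>" "atomless \<nu>" "a < b"
    and "cdf_of \<mu> a - cdf_of \<nu> a = 0" "cdf_of \<mu> b - cdf_of \<nu> b = 0"
    and "\<forall>x\<in>{a<..<b}. cdf_of \<mu> x - cdf_of \<nu> x > 0"
  shows "positivity_interval \<mu> \<nu> a b"
  using assms
  by (simp add: positivity_interval_def positivity_interval_axioms_def atomless_real_distribution_def
      atomless_real_distribution_axioms_def real_distribution_def real_distribution_axioms_def)

theorem mainTheorem10:
  fixes \<mu> \<nu> :: "real measure" and a b :: real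
  assumes "prob_space \<mu>" "prob_space \<nu>"
    and "sets \<mu> = sets borel" "sets \<nu> = sets borel"
    and "atomless \<mu>" "atomless \<nu>"
    and "compactly_supported \<mu>" "compactly_supported \<nu>"
    and "a < b"
  shows
   "(cdf_of \<mu> a - cdf_of \<nu> a = 0 \<and> cdf_of \<mu> b - cdf_of \<nu> b = 0 \<and>
     (\<forall>x\<in>{a<..<b}. cdf_of \<mu> x - cdf_of \<nu> x > 0)
     \<longrightarrow> (\<exists>\<rho>1 \<rho>2 :: real measure.
          sets \<rho>1 = sets borel \<and> sets \<rho>2 = sets borel \<and>
          emeasure \<rho>1 (UNIV - {a<..<b}) = 0 \<and> emeasure \<rho>2 (UNIV - {a<..<b}) = 0 \<and>
          (\<forall>y\<in>{a<..<b}. emeasure \<rho>1 {a<..y} < \<infinity>) \<and>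
          (\<forall>x\<in>{a<..<b}. emeasure \<rho>2 {x..<b} < \<infinity>) \<and>
          restr (density \<rho>1 (\<lambda>x. emeasure \<rho>2 {x..<b})) {a<..<b} = restr \<mu> {a<..<b} \<and>
          restr (density \<rho>2 (\<lambda>y. emeasure \<rho>1 {a<..y})) {a<..<b} = restr \<nu> {a<..<b} \<and>
          continuous_on {a<..<b} (\<lambda>y. measure \<rho>1 {a<..y}) \<and>
          continuous_on {a<..<b} (\<lambda>x. measure \<rho>2 {x..<b}) \<and>
          (\<forall>y\<in>{a<..<b}. measure \<rho>1 {a<..y} > 0) \<and>
          (\<forall>x\<in>{a<..<b}. measure \<rho>2 {x..<b} > 0) \<and>
          restr (\<rho>1 \<Otimes>\<^sub>M \<rho>2) {p. snd p > fst p}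
            \<in> couplings (restr \<mu> {a<..<b}) (restr \<nu> {a<..<b})))
   \<and>
   (cdf_of \<mu> a - cdf_of \<nu> a = 0 \<and> cdf_of \<mu> b - cdf_of \<nu> b = 0 \<and>
     (\<forall>x\<in>{a<..<b}. cdf_of \<mu> x - cdf_of \<nu> x < 0)
     \<longrightarrow> (\<exists>\<rho>1 \<rho>2 :: real measure.
          sets \<rho>1 = sets borel \<and> sets \<rho>2 = sets borel \<and>
          emeasure \<rho>1 (UNIV - {a<..<b}) = 0 \<and> emeasure \<rho>2 (UNIV - {a<..<b}) = 0 \<and>
          (\<forall>y\<in>{a<..<b}. emeasure \<rho>1 {y..<b} < \<infinity>) \<and>
          (\<forall>x\<in>{a<..<b}. emeasure \<rho>2 {a<..x} < \<infinity>) \<and>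
          restr (density \<rho>1 (\<lambda>x. emeasure \<rho>2 {a<..x})) {a<..<b} = restr \<mu> {a<..<b} \<and>
          restr (density \<rho>2 (\<lambda>y. emeasure \<rho>1 {y..<b})) {a<..<b} = restr \<nu> {a<..<b} \<and>
          continuous_on {a<..<b} (\<lambda>y. measure \<rho>1 {y..<b}) \<and>
          continuous_on {a<..<b} (\<lambda>x. measure \<rho>2 {a<..x}) \<and>
          (\<forall>y\<in>{a<..<b}. measure \<rho>1 {y..<b} > 0) \<and>
          (\<forall>x\<in>{a<..<b}. measure \<rho>2 {a<..x} > 0) \<and>
          restr (\<rho>1 \<Otimes>\<^sub>M \<rho>2) {p. snd p < fst p}
            \<in> couplings (restr \<mu> {a<..<b}) (restr \<nu> {a<..<b})))"
  apply (intro conjI impI)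
  subgoal premises gap
  proof -
    interpret positivity_interval \<mu> \<nu> a b
      using gap by (intro positivity_intervalI assms) auto
    show ?thesis
      by (rule exI[of _ rho1], rule exI[of _ rho2], intro conjI sets_rho emeasure_rho_outside emeasure_rho_finite
          restr_density_rho1 restr_density_rho2 continuous_measure_rho measure_rho_pos
          restr_rho1_rho2_couplings)
  qed
  subgoal premises gap
  proof -
    interpret positivity_interval \<nu> \<mu> a b
      using gap by (intro positivity_intervalI assms) auto
    show ?thesis
      by (rule exI[of _ rho2], rule exI[of _ rho1], intro conjI sets_rho emeasure_rho_outside emeasure_rho_finite
          restr_density_rho1 restr_density_rho2 continuous_measure_rho measure_rho_pos
          restr_rho2_rho1_couplings)
  qed
  done

end
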